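(* For real $u,w$ and an integer $n\ge1$ let $g_n(u,w):=\sum_{i=1}^n i\,w^{i-1}u^{n-i}$. For every natural number $m\ge 1$: (i) $$g_{4m+2}(w,u)-g_{4m+2}(u,w)=\sum_{i=0}^{2m}(4m+1-2i)(uw)^i\left(u^{4m+1-2i}-w^{4m+1-2i}\right)$$ $$=(u+w)\sum_{i=0}^{m-1}(4m-1-4i)\left(u^{4m-4i}-w^{4m-4i}\right)(uw)^{2i}+2\sum_{i=0}^{m-1}\left(u^{4m+1-4i}-w^{4m+1-4i}\right)(uw)^{2i}+(uw)^{2m}(u-w);$$ (ii) $$g_{4m}(w,u)-g_{4m}(u,w)=\sum_{i=0}^{2m-1}(4m-1-2i)(uw)^i\left(u^{4m-1-2i}-w^{4m-1-2i}\right)$$ $$=(u+w)\sum_{i=0}^{m-1}(4m-3-4i)\left(u^{4m-2-4i}-w^{4m-2-4i}\right)(uw)^{2i}+2\sum_{i=0}^{m-1}\left(u^{4m-1-4i}-w^{4m-1-4i}\right)(uw)^{2i}.$$ Furthermore, let $\beta>0$, $k>0$, and $w=\delta(u)$ with $\delta$ the involution defined in the context. Then $g_n(w,u)>g_n(u,w)$ for all even positive integers $n$, both when $-k<u_0<0$ (for $u\in(0,u_1)$) and when $u_0<-k$ (for $u\in(0,k)$).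
   Context: $\Phi(u)=\beta\left(-\frac{u^4}{4}+\frac{k+u_0}{3}u^3-\frac{ku_0}{2}u^2\right)$. Case $-k<u_0<0$: $u_1$ is the unique point of $(0,k)$ with $\Phi(u_1)=\Phi(u_0)$, and for $u\in(0,u_1)$, $\delta(u)$ is the unique $w\in(u_0,0)$ with $\Phi(w)=\Phi(u)$. Case $u_0<-k$: $w_2$ is the unique point of $(u_0,0)$ with $\Phi(w_2)=\Phi(k)$, and for $u\in(0,k)$, $\delta(u)$ is the unique $w\in(w_2,0)$ with $\Phi(w)=\Phi(u)$. *)

theory Defs
  imports Complex_Main
begin

definition g :: "nat \<Rightarrow> real \<Rightarrow> real \<Rightarrow> real" where
  "g n u w = (\<Sum>i=1..n. real i * w ^ (i - 1) * u ^ (n - i))"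

definition Phi :: "real \<Rightarrow> real \<Rightarrow> real \<Rightarrow> real \<Rightarrow> real" where
  "Phi \<beta> k u0 u = \<beta> * (- (u ^ 4) / 4 + (k + u0) / 3 * u ^ 3 - k * u0 / 2 * u ^ 2)"

text \<open>Case -k < u0 < 0.\<close>
definition u1 :: "real \<Rightarrow> real \<Rightarrow> real \<Rightarrow> real" where
  "u1 \<beta> k u0 = (THE v. v \<in> {0<..<k} \<and> Phi \<beta> k u0 v = Phi \<beta> k u0 u0)"

definition delta1 :: "real \<Rightarrow> real \<Rightarrow> real \<Rightarrow> real \<Rightarrow> real" where
  "delta1 \<beta> k u0 u = (THE w. w \<in> {u0<..<0} \<and> Phi \<beta> k u0 w = Phi \<beta> k u0 u)"

text \<open>Case u0 < -k.\<close>
definition w2 :: "real \<Rightarrow> real \<Rightarrow> real \<Rightarrow> real" where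
  "w2 \<beta> k u0 = (THE w. w \<in> {u0<..<0} \<and> Phi \<beta> k u0 w = Phi \<beta> k u0 k)"

definition delta2 :: "real \<Rightarrow> real \<Rightarrow> real \<Rightarrow> real \<Rightarrow> real" where
  "delta2 \<beta> k u0 u = (THE w. w \<in> {w2 \<beta> k u0<..<0} \<and> Phi \<beta> k u0 w = Phi \<beta> k u0 u)"

end

theory Submission
  imports Defs
begin

text \<open>
  Write D n = g n w u - g n u w = (\<Sum>i<n. (n - 1 - 2 i) w^i u^(n-1-i)). Peeling off the
  outermost summands gives D (n+2) = (n+1) (u^(n+1) - w^(n+1)) + u w D n; unrolled for
  n = 2N + 2 this pairs the summands i and n - 1 - i, and merging consecutive pairs with the
  identity (d+2) (u^(d+2) - w^(d+2)) + d u w (u^d - w^d) = d (u+w) (u^(d+1) - w^(d+1)) + 2 (u^(d+2) - w^(d+2))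
  produces the regrouped forms (i) and (ii).

  Since u w may be negative, positivity is propagated four steps at a time: the same identity
  turns two steps of the recurrence into D (n+4) = (n+1) (u+w) (u^(n+2) - w^(n+2))
  + 2 (u^(n+3) - w^(n+3)) + (u w)^2 D n, and for w < u and even n every summand is nonnegative
  and the middle one positive. Finally, Phi decreases on [u0, 0] and increases on [0, k], so in
  both cases \<delta> u is negative and hence below u.
\<close>

lemma g_zero [simp]: "g 0 u w = 0"
  by (simp add: g_def)

lemma g_diff_eq_sum:
  "g n w u - g n u w = (\<Sum>i<n. (real n - 1 - 2 * real i) * w^i * u^(n-1-i))"
proof -
  have swapped: "g n w u = (\<Sum>i<n. real (n - i) * w^i * u^(n-1-i))"
    unfolding g_def
    by (rule sum.reindex_bij_witness[where i="\<lambda>j. n - j" and j="\<lambda>i. n - i"])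
       (auto simp: mult.commute mult.left_commute)
  have plain: "g n u w = (\<Sum>i<n. real (i + 1) * w^i * u^(n-1-i))"
    unfolding g_def
    by (rule sum.reindex_bij_witness[where j="\<lambda>j. j - 1" and i="\<lambda>i. i + 1"]) auto
  show ?thesis
    unfolding swapped plain sum_subtractf[symmetric]
    by (intro sum.cong) (auto simp: algebra_simps)
qed

lemma g_diff_add_two:
  "g (n+2) w u - g (n+2) u w = real (n+1) * (u^(n+1) - w^(n+1)) + u*w * (g n w u - g n u w)"
proof -
  define c where "c m i = (real m - 1 - 2 * real i) * w^i * u^(m-1-i)" for m i
  have "(\<Sum>i<Suc (Suc n). c (n+2) i) = c (n+2) 0 + (\<Sum>i<n. c (n+2) (Suc i)) + c (n+2) (Suc n)"
    by (subst sum.lessThan_Suc_shift) simp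
  also have "(\<Sum>i<n. c (n+2) (Suc i)) = u*w * (\<Sum>i<n. c n i)"
    unfolding sum_distrib_left
  proof (intro sum.cong refl)
    fix i assume "i \<in> {..<n}"
    then obtain d where "n = Suc (i + d)"
      using less_imp_Suc_add by auto
    then show "c (n+2) (Suc i) = u*w * c n i"
      by (simp add: c_def algebra_simps)
  qed
  finally show ?thesis
    unfolding g_diff_eq_sum by (simp add: c_def algebra_simps)
qed

lemma g_diff_even_eq_paired_sum:
  "g (2*N+2) w u - g (2*N+2) u w
     = (\<Sum>i=0..N. real (2*N+1-2*i) * (u*w)^i * (u^(2*N+1-2*i) - w^(2*N+1-2*i)))"
proof (induction N)
  case 0
  show ?case
    using g_diff_add_two[of 0 w u] by simp
next
  case (Suc N)
  define T where "T M i = real (2*M+1-2*i) * (u*w)^i * (u^(2*M+1-2*i) - w^(2*M+1-2*i))" for M i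
  have shift: "T (Suc N) (Suc i) = u*w * T N i" for i
    by (simp add: T_def)
  have "g (2*Suc N+2) w u - g (2*Suc N+2) u w = T (Suc N) 0 + u*w * (g (2*N+2) w u - g (2*N+2) u w)"
    using g_diff_add_two[of "2*N+2" w u] by (simp add: T_def add.assoc)
  also have "\<dots> = T (Suc N) 0 + u*w * (\<Sum>i=0..N. T N i)"
    using Suc.IH unfolding T_def by simp
  also have "\<dots> = (\<Sum>i=0..Suc N. T (Suc N) i)"
    by (subst sum.atLeast0_atMost_Suc_shift) (simp add: shift sum_distrib_left)
  finally show ?case
    unfolding T_def .
qed

lemma power_diff_pair_identity:
  fixes u w :: "'a::comm_ring_1"
  shows "of_nat (d+2) * (u^(d+2) - w^(d+2)) + of_nat d * (u*w) * (u^d - w^d)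
       = (u + w) * (of_nat d * (u^(d+1) - w^(d+1))) + 2 * (u^(d+2) - w^(d+2))"
  by (simp add: algebra_simps)

lemma paired_sum_consecutive_terms:
  fixes u w :: real
  assumes "2*j+1 \<le> N"
  shows "real (2*N+1-2*(2*j)) * (u*w)^(2*j) * (u^(2*N+1-2*(2*j)) - w^(2*N+1-2*(2*j)))
       + real (2*N+1-2*Suc (2*j)) * (u*w)^Suc (2*j) * (u^(2*N+1-2*Suc (2*j)) - w^(2*N+1-2*Suc (2*j)))
       = (u + w) * (real (2*N-1-4*j) * (u^(2*N-4*j) - w^(2*N-4*j)) * (u*w)^(2*j))
         + 2 * ((u^(2*N+1-4*j) - w^(2*N+1-4*j)) * (u*w)^(2*j))"
proof -
  obtain e where "N = 2*j + 1 + e"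
    using assms le_Suc_ex by blast
  then have "2*N+1-2*(2*j) = 2*e+1+2" "2*N+1-2*Suc (2*j) = 2*e+1"
    "2*N-1-4*j = 2*e+1" "2*N-4*j = 2*e+1+1" "2*N+1-4*j = 2*e+1+2"
    by simp_all
  then show ?thesis
    using power_diff_pair_identity[of "2*e+1" u w]
    by (simp only:) (simp add: algebra_simps)
qed

lemma paired_sum_grouped:
  fixes u w :: real
  assumes "2*M+1 \<le> N"
  shows "(\<Sum>i\<le>Suc (2*M). real (2*N+1-2*i) * (u*w)^i * (u^(2*N+1-2*i) - w^(2*N+1-2*i)))
       = (u + w) * (\<Sum>j\<le>M. real (2*N-1-4*j) * (u^(2*N-4*j) - w^(2*N-4*j)) * (u*w)^(2*j))
         + 2 * (\<Sum>j\<le>M. (u^(2*N+1-4*j) - w^(2*N+1-4*j)) * (u*w)^(2*j))"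
  unfolding sum.in_pairs_0 sum_distrib_left sum.distrib[symmetric]
  using assms by (intro sum.cong refl paired_sum_consecutive_terms) auto

lemma g_diff_4m_plus_2:
  fixes u w :: real
  assumes "m \<ge> 1"
  shows "g (4*m+2) w u - g (4*m+2) u w
        = (\<Sum>i=0..2*m. real (4*m+1-2*i) * (u*w)^i * (u^(4*m+1-2*i) - w^(4*m+1-2*i)))
    \<and> (\<Sum>i=0..2*m. real (4*m+1-2*i) * (u*w)^i * (u^(4*m+1-2*i) - w^(4*m+1-2*i)))
        = (u + w) * (\<Sum>i=0..m-1. real (4*m-1-4*i) * (u^(4*m-4*i) - w^(4*m-4*i)) * (u*w)^(2*i))
          + 2 * (\<Sum>i=0..m-1. (u^(4*m+1-4*i) - w^(4*m+1-4*i)) * (u*w)^(2*i))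
          + (u*w)^(2*m) * (u - w)"
proof
  show "g (4*m+2) w u - g (4*m+2) u w
        = (\<Sum>i=0..2*m. real (4*m+1-2*i) * (u*w)^i * (u^(4*m+1-2*i) - w^(4*m+1-2*i)))"
    using g_diff_even_eq_paired_sum[of "2*m" w u] by simp
  define T where "T i = real (4*m+1-2*i) * (u*w)^i * (u^(4*m+1-2*i) - w^(4*m+1-2*i))" for i
  have four: "2*(2*m) = 4*m"
    by simp
  have "2*m = Suc (Suc (2*(m-1)))"
    using assms by simp
  then have "(\<Sum>i=0..2*m. T i) = (\<Sum>i\<le>Suc (2*(m-1)). T i) + T (2*m)"
    by (metis atLeast0AtMost sum.atMost_Suc)
  also have "(\<Sum>i\<le>Suc (2*(m-1)). T i)
      = (u + w) * (\<Sum>i\<le>m-1. real (4*m-1-4*i) * (u^(4*m-4*i) - w^(4*m-4*i)) * (u*w)^(2*i))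
        + 2 * (\<Sum>i\<le>m-1. (u^(4*m+1-4*i) - w^(4*m+1-4*i)) * (u*w)^(2*i))"
    unfolding T_def using paired_sum_grouped[of "m-1" "2*m" u w, unfolded four] assms by simp
  also have "T (2*m) = (u*w)^(2*m) * (u - w)"
    by (simp add: T_def)
  finally show "(\<Sum>i=0..2*m. real (4*m+1-2*i) * (u*w)^i * (u^(4*m+1-2*i) - w^(4*m+1-2*i)))
        = (u + w) * (\<Sum>i=0..m-1. real (4*m-1-4*i) * (u^(4*m-4*i) - w^(4*m-4*i)) * (u*w)^(2*i))
          + 2 * (\<Sum>i=0..m-1. (u^(4*m+1-4*i) - w^(4*m+1-4*i)) * (u*w)^(2*i))
          + (u*w)^(2*m) * (u - w)"
    unfolding T_def atLeast0AtMost .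
qed

lemma g_diff_4m:
  fixes u w :: real
  assumes "m \<ge> 1"
  shows "g (4*m) w u - g (4*m) u w
        = (\<Sum>i=0..2*m-1. real (4*m-1-2*i) * (u*w)^i * (u^(4*m-1-2*i) - w^(4*m-1-2*i)))
    \<and> (\<Sum>i=0..2*m-1. real (4*m-1-2*i) * (u*w)^i * (u^(4*m-1-2*i) - w^(4*m-1-2*i)))
        = (u + w) * (\<Sum>i=0..m-1. real (4*m-3-4*i) * (u^(4*m-2-4*i) - w^(4*m-2-4*i)) * (u*w)^(2*i))
          + 2 * (\<Sum>i=0..m-1. (u^(4*m-1-4*i) - w^(4*m-1-4*i)) * (u*w)^(2*i))"
proof
  have N: "2*(2*m-1) = 4*m-2" "4*m-2+2 = 4*m" "4*m-2+1 = 4*m-1" "4*m-2-1 = 4*m-3"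
    using assms by simp_all
  show "g (4*m) w u - g (4*m) u w
        = (\<Sum>i=0..2*m-1. real (4*m-1-2*i) * (u*w)^i * (u^(4*m-1-2*i) - w^(4*m-1-2*i)))"
    using g_diff_even_eq_paired_sum[of "2*m-1" w u] unfolding N .
  have "{0..2*m-1} = {..Suc (2*(m-1))}" "{0..m-1} = {..m-1}"
    using assms by auto
  then show "(\<Sum>i=0..2*m-1. real (4*m-1-2*i) * (u*w)^i * (u^(4*m-1-2*i) - w^(4*m-1-2*i)))
        = (u + w) * (\<Sum>i=0..m-1. real (4*m-3-4*i) * (u^(4*m-2-4*i) - w^(4*m-2-4*i)) * (u*w)^(2*i))
          + 2 * (\<Sum>i=0..m-1. (u^(4*m-1-4*i) - w^(4*m-1-4*i)) * (u*w)^(2*i))"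
    using paired_sum_grouped[of "m-1" "2*m-1" u w, unfolded N] assms by simp
qed

lemma g_diff_add_four:
  "g (n+4) w u - g (n+4) u w
     = (u + w) * (real (n+1) * (u^(n+2) - w^(n+2))) + 2 * (u^(n+3) - w^(n+3))
       + (u*w)^2 * (g n w u - g n u w)"
proof -
  have idx: "n+2+2 = n+4" "n+2+1 = n+3" "n+1+2 = n+3" "n+1+1 = n+2"
    by simp_all
  have "g (n+4) w u - g (n+4) u w
      = real (n+3) * (u^(n+3) - w^(n+3))
        + u*w * (real (n+1) * (u^(n+1) - w^(n+1)) + u*w * (g n w u - g n u w))"
    using g_diff_add_two[of "n+2" w u, unfolded idx] g_diff_add_two[of n w u] by simp
  also have "\<dots> = (real (n+3) * (u^(n+3) - w^(n+3)) + real (n+1) * (u*w) * (u^(n+1) - w^(n+1)))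
        + (u*w)^2 * (g n w u - g n u w)"
    by (simp add: algebra_simps power2_eq_square)
  finally show ?thesis
    unfolding power_diff_pair_identity[of "n+1" u w, unfolded idx] .
qed

lemma odd_power_strict_mono:
  fixes u w :: real
  assumes "odd n" "w < u"
  shows "w^n < u^n"
  using assms by (metis odd_pos odd_real_root_power_cancel real_root_less_iff)

lemma even_power_diff_mult_nonneg:
  fixes u w :: "'a::linordered_idom"
  assumes "even n" "w \<le> u"
  shows "0 \<le> (u + w) * (u^n - w^n)"
proof (cases "0 \<le> u + w")
  case True
  then have "w^n \<le> u^n"
    using assms by (intro power_mono_even) auto
  then show ?thesis
    using True by simp
next
  case False
  then have "u^n \<le> w^n"
    using assms by (intro power_mono_even) auto
  then show ?thesis
    using False by (simp add: mult_nonpos_nonpos)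
qed

lemma g_diff_even_pos:
  fixes u w :: real
  assumes "w < u" "even n" "0 < n"
  shows "g n u w < g n w u"
proof -
  have "0 \<le> g (2*N) w u - g (2*N) u w \<and> 0 < g (2*N+2) w u - g (2*N+2) u w" for N
  proof (induction N)
    case 0
    show ?case
      using g_diff_add_two[of 0 w u] assms(1) by simp
  next
    case (Suc N)
    have "0 \<le> real (2*N+1) * ((u + w) * (u^(2*N+2) - w^(2*N+2)))"
      using even_power_diff_mult_nonneg[of "2*N+2" w u] assms(1) by simp
    then have "0 \<le> (u + w) * (real (2*N+1) * (u^(2*N+2) - w^(2*N+2)))"
      by (metis mult.left_commute)
    moreover have "0 < u^(2*N+3) - w^(2*N+3)"
      using odd_power_strict_mono[of "2*N+3" w u] assms(1) by simp
    moreover have "0 \<le> (u*w)^2 * (g (2*N) w u - g (2*N) u w)"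
      using Suc.IH by simp
    ultimately have pos: "0 < g (2*N+4) w u - g (2*N+4) u w"
      unfolding g_diff_add_four by (intro add_pos_nonneg add_nonneg_pos) simp_all
    have idx: "2 * Suc N = 2*N+2" "2*N+2+2 = 2*N+4"
      by simp_all
    show ?case
      unfolding idx using less_imp_le[OF conjunct2[OF Suc.IH]] pos by (rule conjI)
  qed
  moreover obtain k where "n = 2*k"
    using assms(2) by (rule evenE)
  with assms(3) obtain N where "n = 2*N+2"
    by (cases k) auto
  ultimately show ?thesis
    by auto
qed

lemma ex1_between_strict_mono_on:
  fixes f :: "'a::linear_continuum_topology \<Rightarrow> 'b::linorder_topology"
  assumes "continuous_on {a..b} f" "strict_mono_on {a..b} f" "a \<le> b" "f a < y" "y < f b"
  shows "\<exists>!x. x \<in> {a<..<b} \<and> f x = y"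
proof (rule ex_ex1I)
  obtain x where "a \<le> x" "x \<le> b" "f x = y"
    using IVT'[OF less_imp_le[OF assms(4)] less_imp_le[OF assms(5)] assms(3,1)] by blast
  moreover have "x \<noteq> a" "x \<noteq> b"
    using assms \<open>f x = y\<close> by auto
  ultimately show "\<exists>x. x \<in> {a<..<b} \<and> f x = y"
    by (intro exI[of _ x]) auto
next
  show "x = z" if "x \<in> {a<..<b} \<and> f x = y" "z \<in> {a<..<b} \<and> f z = y" for x z
    using inj_onD[OF strict_mono_on_imp_inj_on[OF assms(2)], of x z] that by (auto simp: less_imp_le)
qed

lemma ex1_between_strict_antimono_on:
  fixes f :: "'a::linear_continuum_topology \<Rightarrow> 'b::linorder_topology"
  assumes "continuous_on {a..b} f" "strict_antimono_on {a..b} f" "a \<le> b" "f b < y" "y < f a"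
  shows "\<exists>!x. x \<in> {a<..<b} \<and> f x = y"
proof (rule ex_ex1I)
  obtain x where "a \<le> x" "x \<le> b" "f x = y"
    using IVT2'[OF less_imp_le[OF assms(4)] less_imp_le[OF assms(5)] assms(3,1)] by blast
  moreover have "x \<noteq> a" "x \<noteq> b"
    using assms \<open>f x = y\<close> by auto
  ultimately show "\<exists>x. x \<in> {a<..<b} \<and> f x = y"
    by (intro exI[of _ x]) auto
next
  have "inj_on f {a..b}"
    using assms(2) strict_antimono_iff_antimono by blast
  then show "x = z" if "x \<in> {a<..<b} \<and> f x = y" "z \<in> {a<..<b} \<and> f z = y" for x z
    using inj_onD[of f "{a..b}" x z] that by (auto simp: less_imp_le)
qed

lemma Phi_has_real_derivative:
  "(Phi \<beta> k u0 has_real_derivative - \<beta> * (x * (x - k) * (x - u0))) (at x)"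
  unfolding Phi_def
  by (auto intro!: derivative_eq_intros simp: algebra_simps power2_eq_square power3_eq_cube)

lemma continuous_on_Phi: "continuous_on S (Phi \<beta> k u0)"
  unfolding Phi_def by (intro continuous_intros) auto

lemma Phi_zero [simp]: "Phi \<beta> k u0 0 = 0"
  by (simp add: Phi_def)

lemma Phi_u0_minus_Phi_k: "Phi \<beta> k u0 u0 - Phi \<beta> k u0 k = \<beta> / 12 * ((u0^2 - k^2) * (u0 - k)^2)"
  unfolding Phi_def by (simp add: field_simps power2_eq_square power3_eq_cube power4_eq_xxxx)

lemma strict_mono_on_Phi:
  assumes "0 < \<beta>" "u0 \<le> 0"
  shows "strict_mono_on {0..k} (Phi \<beta> k u0)"
proof (rule strict_mono_onI)
  fix a b assume "a \<in> {0..k}" "b \<in> {0..k}" "a < b"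
  then show "Phi \<beta> k u0 a < Phi \<beta> k u0 b"
  proof (intro DERIV_pos_imp_increasing_open[OF \<open>a < b\<close>] exI conjI)
    fix x assume "a < x" "x < b"
    then have "x * (x - k) * (x - u0) < 0"
      using \<open>a \<in> {0..k}\<close> \<open>b \<in> {0..k}\<close> assms(2)
      by (intro mult_neg_pos mult_pos_neg) auto
    then show "0 < - \<beta> * (x * (x - k) * (x - u0))"
      using assms(1) by (simp add: mult_pos_neg)
  qed (rule Phi_has_real_derivative continuous_on_Phi)+
qed

lemma strict_antimono_on_Phi:
  assumes "0 < \<beta>" "0 \<le> k"
  shows "strict_antimono_on {u0..0} (Phi \<beta> k u0)"
proof (rule monotone_onI)
  fix a b assume "a \<in> {u0..0}" "b \<in> {u0..0}" "a < b"
  then show "Phi \<beta> k u0 b < Phi \<beta> k u0 a"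
  proof (intro DERIV_neg_imp_decreasing_open[OF \<open>a < b\<close>] exI conjI)
    fix x assume "a < x" "x < b"
    then have "0 < x * (x - k) * (x - u0)"
      using \<open>a \<in> {u0..0}\<close> \<open>b \<in> {u0..0}\<close> assms(2)
      by (intro mult_pos_pos mult_neg_neg) auto
    then show "- \<beta> * (x * (x - k) * (x - u0)) < 0"
      using assms(1) by simp
  qed (rule Phi_has_real_derivative continuous_on_Phi)+
qed

lemma u1_mem:
  assumes "0 < \<beta>" "0 < k" "-k < u0" "u0 < 0"
  shows "u1 \<beta> k u0 \<in> {0<..<k} \<and> Phi \<beta> k u0 (u1 \<beta> k u0) = Phi \<beta> k u0 u0"
proof -
  have "(-u0)^2 < k^2"
    using assms by (intro power_strict_mono) auto
  then have "(u0^2 - k^2) * (u0 - k)^2 < 0"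
    using assms by (intro mult_neg_pos) auto
  then have "\<beta> / 12 * ((u0^2 - k^2) * (u0 - k)^2) < 0"
    using assms(1) by (simp add: mult_pos_neg)
  then have "Phi \<beta> k u0 u0 < Phi \<beta> k u0 k"
    using Phi_u0_minus_Phi_k[of \<beta> k u0] by linarith
  moreover have "Phi \<beta> k u0 0 < Phi \<beta> k u0 u0"
    using monotone_onD[OF strict_antimono_on_Phi, of \<beta> k u0 u0 0] assms by simp
  ultimately have "\<exists>!v. v \<in> {0<..<k} \<and> Phi \<beta> k u0 v = Phi \<beta> k u0 u0"
    using assms by (intro ex1_between_strict_mono_on continuous_on_Phi strict_mono_on_Phi) auto
  then show ?thesis
    unfolding u1_def by (rule theI')
qed

lemma delta1_mem:
  assumes "0 < \<beta>" "0 < k" "-k < u0" "u0 < 0" "0 < u" "u < u1 \<beta> k u0"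
  shows "delta1 \<beta> k u0 u \<in> {u0<..<0}"
proof -
  note u1 = u1_mem[OF assms(1-4)]
  have mono: "strict_mono_on {0..k} (Phi \<beta> k u0)"
    using assms by (intro strict_mono_on_Phi) auto
  have "Phi \<beta> k u0 0 < Phi \<beta> k u0 u"
    using monotone_onD[OF mono, of 0 u] u1 assms by simp
  moreover have "Phi \<beta> k u0 u < Phi \<beta> k u0 (u1 \<beta> k u0)"
    using monotone_onD[OF mono, of u "u1 \<beta> k u0"] u1 assms by simp
  ultimately have "\<exists>!w. w \<in> {u0<..<0} \<and> Phi \<beta> k u0 w = Phi \<beta> k u0 u"
    using u1 assms by (intro ex1_between_strict_antimono_on continuous_on_Phi strict_antimono_on_Phi) auto
  then show ?thesis
    unfolding delta1_def by (rule theI'[THEN conjunct1])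
qed

lemma w2_mem:
  assumes "0 < \<beta>" "0 < k" "u0 < -k"
  shows "w2 \<beta> k u0 \<in> {u0<..<0} \<and> Phi \<beta> k u0 (w2 \<beta> k u0) = Phi \<beta> k u0 k"
proof -
  have "k^2 < (-u0)^2"
    using assms by (intro power_strict_mono) auto
  then have "0 < (u0^2 - k^2) * (u0 - k)^2"
    using assms by (intro mult_pos_pos) auto
  then have "0 < \<beta> / 12 * ((u0^2 - k^2) * (u0 - k)^2)"
    using assms(1) by simp
  then have "Phi \<beta> k u0 k < Phi \<beta> k u0 u0"
    using Phi_u0_minus_Phi_k[of \<beta> k u0] by linarith
  moreover have "Phi \<beta> k u0 0 < Phi \<beta> k u0 k"
    using monotone_onD[OF strict_mono_on_Phi[OF assms(1)], of u0 0 k] assms by simp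
  ultimately have "\<exists>!w. w \<in> {u0<..<0} \<and> Phi \<beta> k u0 w = Phi \<beta> k u0 k"
    using assms by (intro ex1_between_strict_antimono_on continuous_on_Phi strict_antimono_on_Phi) auto
  then show ?thesis
    unfolding w2_def by (rule theI')
qed

lemma delta2_mem:
  assumes "0 < \<beta>" "0 < k" "u0 < -k" "0 < u" "u < k"
  shows "delta2 \<beta> k u0 u \<in> {w2 \<beta> k u0<..<0}"
proof -
  note w2 = w2_mem[OF assms(1-3)]
  have mono: "strict_mono_on {0..k} (Phi \<beta> k u0)"
    using assms by (intro strict_mono_on_Phi) auto
  have "Phi \<beta> k u0 0 < Phi \<beta> k u0 u"
    using monotone_onD[OF mono, of 0 u] assms by simp
  moreover have "Phi \<beta> k u0 u < Phi \<beta> k u0 (w2 \<beta> k u0)"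
    using monotone_onD[OF mono, of u k] w2 assms by simp
  ultimately have "\<exists>!w. w \<in> {w2 \<beta> k u0<..<0} \<and> Phi \<beta> k u0 w = Phi \<beta> k u0 u"
    using w2 assms
    by (intro ex1_between_strict_antimono_on continuous_on_Phi monotone_on_subset[OF strict_antimono_on_Phi]) auto
  then show ?thesis
    unfolding delta2_def by (rule theI'[THEN conjunct1])
qed

theorem lemma3p7:
  shows
  "(\<forall>(m::nat) (u::real) (w::real). m \<ge> 1 \<longrightarrow>
      g (4*m+2) w u - g (4*m+2) u w
        = (\<Sum>i=0..2*m. real (4*m+1-2*i) * (u*w)^i * (u^(4*m+1-2*i) - w^(4*m+1-2*i)))
    \<and> (\<Sum>i=0..2*m. real (4*m+1-2*i) * (u*w)^i * (u^(4*m+1-2*i) - w^(4*m+1-2*i)))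
        = (u + w) * (\<Sum>i=0..m-1. real (4*m-1-4*i) * (u^(4*m-4*i) - w^(4*m-4*i)) * (u*w)^(2*i))
          + 2 * (\<Sum>i=0..m-1. (u^(4*m+1-4*i) - w^(4*m+1-4*i)) * (u*w)^(2*i))
          + (u*w)^(2*m) * (u - w))
   \<and> (\<forall>(m::nat) (u::real) (w::real). m \<ge> 1 \<longrightarrow>
      g (4*m) w u - g (4*m) u w
        = (\<Sum>i=0..2*m-1. real (4*m-1-2*i) * (u*w)^i * (u^(4*m-1-2*i) - w^(4*m-1-2*i)))
    \<and> (\<Sum>i=0..2*m-1. real (4*m-1-2*i) * (u*w)^i * (u^(4*m-1-2*i) - w^(4*m-1-2*i)))
        = (u + w) * (\<Sum>i=0..m-1. real (4*m-3-4*i) * (u^(4*m-2-4*i) - w^(4*m-2-4*i)) * (u*w)^(2*i))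
          + 2 * (\<Sum>i=0..m-1. (u^(4*m-1-4*i) - w^(4*m-1-4*i)) * (u*w)^(2*i)))
   \<and> (\<forall>(\<beta>::real) (k::real) (u0::real) (n::nat) (u::real).
      \<beta> > 0 \<longrightarrow> k > 0 \<longrightarrow> -k < u0 \<longrightarrow> u0 < 0 \<longrightarrow> even n \<longrightarrow> n > 0 \<longrightarrow>
      0 < u \<longrightarrow> u < u1 \<beta> k u0 \<longrightarrow>
      g n (delta1 \<beta> k u0 u) u > g n u (delta1 \<beta> k u0 u))
   \<and> (\<forall>(\<beta>::real) (k::real) (u0::real) (n::nat) (u::real).
      \<beta> > 0 \<longrightarrow> k > 0 \<longrightarrow> u0 < -k \<longrightarrow> even n \<longrightarrow> n > 0 \<longrightarrow>
      0 < u \<longrightarrow> u < k \<longrightarrow>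
      g n (delta2 \<beta> k u0 u) u > g n u (delta2 \<beta> k u0 u))"
proof -
  have "g n u (delta1 \<beta> k u0 u) < g n (delta1 \<beta> k u0 u) u"
    if "0 < \<beta>" "0 < k" "-k < u0" "u0 < 0" "even n" "0 < n" "0 < u" "u < u1 \<beta> k u0"
    for \<beta> k u0 n u
    using delta1_mem[of \<beta> k u0 u] that by (intro g_diff_even_pos) auto
  moreover have "g n u (delta2 \<beta> k u0 u) < g n (delta2 \<beta> k u0 u) u"
    if "0 < \<beta>" "0 < k" "u0 < -k" "even n" "0 < n" "0 < u" "u < k"
    for \<beta> k u0 n u
    using delta2_mem[of \<beta> k u0 u] w2_mem[of \<beta> k u0] that by (intro g_diff_even_pos) auto
  ultimately show ?thesis
    using g_diff_4m_plus_2 g_diff_4m by blast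
qed

end
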